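(* For every integer $n\geq 1$, the following equalities of combinatorial games hold: $$\uparrow^{[n]}*\ =\ \left\{0, \uparrow^{[n-1]}*\ \big|\ 0, \uparrow^{[n+1]}*\right\}\ =\ \left\{0, \uparrow^{[n-1]}*\ \big|\ 0\right\},$$ $$\downarrow_{[n]}*\ =\ \left\{0,\downarrow_{[n+1]}*\ \big|\ 0, \downarrow_{[n-1]}*\right\}\ =\ \left\{0\ \big|\ 0, \downarrow_{[n-1]}*\right\}.$$ Furthermore, $$\uparrow^{[n]}*\ =\ \left\{0,\{0,\uparrow^{[n]}*\ |\ 0,\uparrow^{[n]}*\}\ \Big|\ 0,\{0,\uparrow^{[n]}*\ |\ 0,\uparrow^{[n]}*\}\right\},$$ $$\downarrow_{[n]}*\ =\ \left\{0,\{0,\downarrow_{[n]}*\ |\ 0,\downarrow_{[n]}*\}\ \Big|\ 0,\{0,\downarrow_{[n]}*\ |\ 0,\downarrow_{[n]}*\}\right\}.$$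
   Context: Games are short partizan combinatorial games under normal play (the player unable to move loses), in Conway's theory: $\{X\mid Y\}$ denotes the game whose Left options are the games in $X$ and Right options the games in $Y$; $G+H$ is the disjunctive sum; $-G$ swaps the roles of Left and Right; $G=H$ means that $G+(-H)$ is a win for the second player. Notation: $0=\{\,\mid\,\}$, $*=\{0\mid 0\}$, $\uparrow=\{0\mid *\}$, $\downarrow=\{*\mid 0\}$; $\uparrow^{[1]}=\uparrow$ and $\uparrow^{[n]}=\{\uparrow^{[n-1]}\mid *\}$ for $n\geq 2$; $\downarrow_{[1]}=\downarrow$ and $\downarrow_{[n]}=\{*\mid \downarrow_{[n-1]}\}$ for $n\geq 2$; with the convention $\uparrow^{[0]}=\downarrow_{[0]}=0$. For a game $J$, $J*$ denotes $J+*$. *)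

theory Defs
  imports Main
begin

text \<open>Short partizan games, represented syntactically: a game is given by the
finite list of its Left options and the finite list of its Right options.\<close>

datatype game = Game "game list" "game list"

definition zero :: game where "zero = Game [] []"
definition star :: game where "star = Game [zero] [zero]"

primrec neg :: "game \<Rightarrow> game" where
  "neg (Game L R) = Game (map neg R) (map neg L)"

lemma size_mem_lt: "x \<in> set xs \<Longrightarrow> size x < Suc (size_list size xs + k)"
  by (induction xs) auto

lemma size_mem_lt2: "x \<in> set xs \<Longrightarrow> size x < Suc (k + size_list size xs)"
  by (induction xs) auto

function gsum :: "game \<Rightarrow> game \<Rightarrow> game" where
  "gsum (Game GL GR) (Game HL HR) =
     Game (map (\<lambda>x. gsum x (Game HL HR)) GL @ map (\<lambda>y. gsum (Game GL GR) y) HL)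
          (map (\<lambda>x. gsum x (Game HL HR)) GR @ map (\<lambda>y. gsum (Game GL GR) y) HR)"
  by pat_completeness auto
termination
  by (relation "measure (\<lambda>(G, H). size G + size H)")
     (auto intro: size_mem_lt size_mem_lt2)

fun left_first_win :: "game \<Rightarrow> bool" and right_first_win :: "game \<Rightarrow> bool" where
  "left_first_win (Game L R) = (\<exists>x\<in>set L. \<not> right_first_win x)"
| "right_first_win (Game L R) = (\<exists>y\<in>set R. \<not> left_first_win y)"

definition second_player_win :: "game \<Rightarrow> bool" where
  "second_player_win G \<longleftrightarrow> \<not> left_first_win G \<and> \<not> right_first_win G"

definition game_eq :: "game \<Rightarrow> game \<Rightarrow> bool" where
  "game_eq G H \<longleftrightarrow> second_player_win (gsum G (neg H))"

text \<open>\<up>^[n] and \<down>_[n], with \<up>^[0] = \<down>_[0] = 0;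
  \<up>^[1] = {0|*} = \<up>, \<up>^[n] = {\<up>^[n-1] | *};
  \<down>_[1] = {*|0} = \<down>, \<down>_[n] = {* | \<down>_[n-1]}.\<close>
primrec upn :: "nat \<Rightarrow> game" where
  "upn 0 = zero"
| "upn (Suc n) = Game [upn n] [star]"

primrec downn :: "nat \<Rightarrow> game" where
  "downn 0 = zero"
| "downn (Suc n) = Game [star] [downn n]"

end

theory Submission
  imports Defs
begin

(* Two games are equal as soon as each is below the other in Conway's recursive order,
   because sums are monotone and G + (-G) = 0.  Write U k for \<up>^[k]*.  For k \<ge> 1 its Left
   options are U (k-1) and \<up>^[k] and its Right options are ** and \<up>^[k]; U k is confused
   with 0 and strictly increasing in k.  Each identity compares U (k+1) with a game {0, L | 0, R}:
   the options 0 settle most cases, and what remains is that no option in L is above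
   U (k+1), no option in R is below * or U (k+1), and {0, L | 0, R} is not below U k.
   The \<down> identities are the negatives of the \<up> identities, since \<down>_[k] = -\<up>^[k] and * = -*. *)

fun left_opts :: "game \<Rightarrow> game list" where "left_opts (Game L R) = L"
fun right_opts :: "game \<Rightarrow> game list" where "right_opts (Game L R) = R"

lemma size_left_opt: "x \<in> set (left_opts G) \<Longrightarrow> size x < size G"
  by (cases G) (auto intro: size_mem_lt)

lemma size_right_opt: "y \<in> set (right_opts G) \<Longrightarrow> size y < size G"
  by (cases G) (auto intro: size_mem_lt2)

function game_le :: "game \<Rightarrow> game \<Rightarrow> bool" (infix "\<preceq>" 50) where
  "Game GL GR \<preceq> Game HL HR \<longleftrightarrow>
     (\<forall>x\<in>set GL. \<not> Game HL HR \<preceq> x) \<and> (\<forall>y\<in>set HR. \<not> y \<preceq> Game GL GR)"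
  by pat_completeness auto
termination
  by (relation "measure (\<lambda>(G, H). size G + size H)") (auto intro: size_mem_lt size_mem_lt2)

declare game_le.simps [simp del]

lemma game_le_iff:
  "G \<preceq> H \<longleftrightarrow> (\<forall>x\<in>set (left_opts G). \<not> H \<preceq> x) \<and> (\<forall>y\<in>set (right_opts H). \<not> y \<preceq> G)"
  by (cases G; cases H) (simp add: game_le.simps)

lemma not_game_le_iff:
  "\<not> G \<preceq> H \<longleftrightarrow> (\<exists>x\<in>set (left_opts G). H \<preceq> x) \<or> (\<exists>y\<in>set (right_opts H). y \<preceq> G)"
  by (subst game_le_iff) blast

lemma game_le_refl [simp]: "G \<preceq> G"
proof (induction G)
  case (Game L R)
  then show ?case
    by (subst game_le_iff) (auto simp: not_game_le_iff)
qed

lemma not_le_left_opt: "x \<in> set (left_opts G) \<Longrightarrow> \<not> G \<preceq> x"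
  using game_le_refl not_game_le_iff by blast

lemma not_right_opt_le: "y \<in> set (right_opts G) \<Longrightarrow> \<not> y \<preceq> G"
  using game_le_refl not_game_le_iff by blast

lemma game_le_trans: "A \<preceq> B \<Longrightarrow> B \<preceq> C \<Longrightarrow> A \<preceq> C"
proof (induction "size A + size B + size C" arbitrary: A B C rule: less_induct)
  case less
  show ?case
  proof (subst game_le_iff, intro conjI ballI notI)
    fix x assume x: "x \<in> set (left_opts A)" and "C \<preceq> x"
    have "size B + size C + size x < size A + size B + size C" using size_left_opt[OF x] by simp
    with less \<open>C \<preceq> x\<close> have "B \<preceq> x" by blast
    with less.prems(1) x show False by (simp add: game_le_iff[of A])
  next
    fix y assume y: "y \<in> set (right_opts C)" and "y \<preceq> A"
    have "size y + size A + size B < size A + size B + size C" using size_right_opt[OF y] by simp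
    with less \<open>y \<preceq> A\<close> have "y \<preceq> B" by blast
    with less.prems(2) y show False by (simp add: game_le_iff[of B])
  qed
qed

lemma not_le_if_le_left_opt: "x \<in> set (left_opts H) \<Longrightarrow> G \<preceq> x \<Longrightarrow> \<not> H \<preceq> G"
  using game_le_trans not_le_left_opt by blast

lemma not_le_if_right_opt_le: "y \<in> set (right_opts G) \<Longrightarrow> y \<preceq> H \<Longrightarrow> \<not> H \<preceq> G"
  using game_le_trans not_right_opt_le by blast

lemma left_opts_gsum:
  "left_opts (gsum G H) = map (\<lambda>x. gsum x H) (left_opts G) @ map (gsum G) (left_opts H)"
  by (cases G; cases H) simp

lemma right_opts_gsum:
  "right_opts (gsum G H) = map (\<lambda>y. gsum y H) (right_opts G) @ map (gsum G) (right_opts H)"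
  by (cases G; cases H) simp

lemma left_opts_neg: "left_opts (neg G) = map neg (right_opts G)"
  by (cases G) simp

lemma right_opts_neg: "right_opts (neg G) = map neg (left_opts G)"
  by (cases G) simp

lemma size_neg [simp]: "size (neg G) = size G"
proof (induction G)
  case (Game L R)
  have "size_list (size \<circ> neg) xs = size_list size xs" if "set xs \<subseteq> set L \<union> set R" for xs
    using that Game by (induction xs) (auto simp: comp_def)
  then show ?case by simp
qed

lemma neg_le_neg_iff [simp]: "neg A \<preceq> neg B \<longleftrightarrow> B \<preceq> A"
proof (induction "size A + size B" arbitrary: A B rule: less_induct)
  case less
  have "neg l \<preceq> neg A \<longleftrightarrow> A \<preceq> l" if "l \<in> set (left_opts B)" for l
    using less size_left_opt[OF that] by simp
  moreover have "neg B \<preceq> neg r \<longleftrightarrow> r \<preceq> B" if "r \<in> set (right_opts A)" for r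
    using less size_right_opt[OF that] by simp
  ultimately show ?case
    by (subst game_le_iff, subst game_le_iff[of B]) (auto simp: left_opts_neg right_opts_neg)
qed

lemma neg_gsum: "neg (gsum G H) = gsum (neg G) (neg H)"
  by (induction G H rule: gsum.induct) simp

lemma gsum_mono_left_opts:
  assumes IH: "\<And>A' B' C' D'. size A' + size B' + size C' + size D' < size A + size B + size C + size D
      \<Longrightarrow> A' \<preceq> B' \<Longrightarrow> C' \<preceq> D' \<Longrightarrow> gsum A' C' \<preceq> gsum B' D'"
    and "A \<preceq> B" "C \<preceq> D" "x \<in> set (left_opts (gsum A C))"
  shows "\<not> gsum B D \<preceq> x"
proof -
  note sizes = size_left_opt size_right_opt
  note opts = left_opts_gsum right_opts_gsum
  consider (A) a where "a \<in> set (left_opts A)" "x = gsum a C"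
    | (C) c where "c \<in> set (left_opts C)" "x = gsum A c"
    using assms(4) by (auto simp: left_opts_gsum)
  then show ?thesis
  proof cases
    case A
    with \<open>A \<preceq> B\<close> have "\<not> B \<preceq> a" by (simp add: game_le_iff[of A])
    then consider b where "b \<in> set (left_opts B)" "a \<preceq> b"
      | r where "r \<in> set (right_opts a)" "r \<preceq> B"
      by (auto simp: not_game_le_iff)
    then show ?thesis
    proof cases
      case 1
      with A \<open>C \<preceq> D\<close> have "gsum a C \<preceq> gsum b D" by (intro IH) (auto dest!: sizes)
      with 1 A show ?thesis by (intro not_le_if_le_left_opt[of "gsum b D"]) (simp_all add: opts)
    next
      case 2
      with A \<open>C \<preceq> D\<close> have "gsum r C \<preceq> gsum B D" by (intro IH) (auto dest!: sizes)
      with 2 A show ?thesis by (intro not_le_if_right_opt_le[of "gsum r C"]) (simp_all add: opts)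
    qed
  next
    case C
    with \<open>C \<preceq> D\<close> have "\<not> D \<preceq> c" by (simp add: game_le_iff[of C])
    then consider d where "d \<in> set (left_opts D)" "c \<preceq> d"
      | r where "r \<in> set (right_opts c)" "r \<preceq> D"
      by (auto simp: not_game_le_iff)
    then show ?thesis
    proof cases
      case 1
      with C \<open>A \<preceq> B\<close> have "gsum A c \<preceq> gsum B d" by (intro IH) (auto dest!: sizes)
      with 1 C show ?thesis by (intro not_le_if_le_left_opt[of "gsum B d"]) (simp_all add: opts)
    next
      case 2
      with C \<open>A \<preceq> B\<close> have "gsum A r \<preceq> gsum B D" by (intro IH) (auto dest!: sizes)
      with 2 C show ?thesis by (intro not_le_if_right_opt_le[of "gsum A r"]) (simp_all add: opts)
    qed
  qed
qed

lemma gsum_mono: "A \<preceq> B \<Longrightarrow> C \<preceq> D \<Longrightarrow> gsum A C \<preceq> gsum B D"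
proof (induction "size A + size B + size C + size D" arbitrary: A B C D rule: less_induct)
  case less
  show ?case
  proof (subst game_le_iff, intro conjI ballI)
    fix x assume "x \<in> set (left_opts (gsum A C))"
    with less show "\<not> gsum B D \<preceq> x"
      by (intro gsum_mono_left_opts) auto
  next
    fix y assume "y \<in> set (right_opts (gsum B D))"
    \<comment> \<open>negation swaps Left and Right options and reverses the order\<close>
    then have "neg y \<in> set (left_opts (gsum (neg B) (neg D)))"
      by (simp flip: neg_gsum add: left_opts_neg)
    with less have "\<not> gsum (neg A) (neg C) \<preceq> neg y"
      by (intro gsum_mono_left_opts[of "neg B" "neg A" "neg D" "neg C"]) auto
    then show "\<not> y \<preceq> gsum A C"
      by (simp flip: neg_gsum)
  qed
qed

lemma left_opts_zero [simp]: "left_opts zero = []"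
  and right_opts_zero [simp]: "right_opts zero = []"
  and neg_zero [simp]: "neg zero = zero"
  by (simp_all add: zero_def)

lemma zero_le_iff_neg_le_zero: "zero \<preceq> G \<longleftrightarrow> neg G \<preceq> zero"
  using neg_le_neg_iff[of G zero] by simp

lemma gsum_neg_self_le_zero: "gsum G (neg G) \<preceq> zero"
proof (induction "size G" arbitrary: G rule: less_induct)
  case less
  have IH: "gsum y (neg y) \<preceq> zero" if "size y < size G" for y
    using less that by blast
  show ?case
  proof (subst game_le_iff, intro conjI ballI)
    fix x assume "x \<in> set (left_opts (gsum G (neg G)))"
    then consider (G) a where "a \<in> set (left_opts G)" "x = gsum a (neg G)"
      | (neg) b where "b \<in> set (right_opts G)" "x = gsum G (neg b)"
      by (auto simp: left_opts_gsum left_opts_neg)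
    then show "\<not> zero \<preceq> x"
    proof cases
      case G
      then have "gsum a (neg a) \<in> set (right_opts x)"
        by (simp add: right_opts_gsum right_opts_neg)
      moreover have "gsum a (neg a) \<preceq> zero"
        using G by (intro IH size_left_opt)
      ultimately show ?thesis by (rule not_le_if_right_opt_le)
    next
      case neg
      then have "gsum b (neg b) \<in> set (right_opts x)"
        by (simp add: right_opts_gsum)
      moreover have "gsum b (neg b) \<preceq> zero"
        using neg by (intro IH size_right_opt)
      ultimately show ?thesis by (rule not_le_if_right_opt_le)
    qed
  qed simp
qed

lemma zero_le_gsum_neg_self: "zero \<preceq> gsum G (neg G)"
  using gsum_neg_self_le_zero[of "neg G"] by (simp add: zero_le_iff_neg_le_zero neg_gsum)

lemma not_left_first_win_iff: "\<not> left_first_win G \<longleftrightarrow> G \<preceq> zero"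
  and not_right_first_win_iff: "\<not> right_first_win G \<longleftrightarrow> zero \<preceq> G"
  by (induction G and G rule: left_first_win_right_first_win.induct)
    (auto simp: game_le.simps zero_def)

definition game_equiv :: "game \<Rightarrow> game \<Rightarrow> bool" (infix "\<approx>" 50) where
  "G \<approx> H \<longleftrightarrow> G \<preceq> H \<and> H \<preceq> G"

lemma game_equiv_sym: "G \<approx> H \<Longrightarrow> H \<approx> G"
  by (auto simp: game_equiv_def)

lemma game_equiv_trans: "A \<approx> B \<Longrightarrow> B \<approx> C \<Longrightarrow> A \<approx> C"
  by (auto simp: game_equiv_def intro: game_le_trans)

lemma neg_equiv_neg_iff: "neg G \<approx> neg H \<longleftrightarrow> G \<approx> H"
  by (auto simp: game_equiv_def)

lemma game_eq_if_equiv: "G \<approx> H \<Longrightarrow> game_eq G H"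
proof -
  assume "G \<approx> H"
  then have "gsum G (neg H) \<approx> gsum H (neg H)"
    by (simp add: game_equiv_def gsum_mono)
  then show "game_eq G H"
    unfolding game_eq_def second_player_win_def not_left_first_win_iff not_right_first_win_iff
    using game_le_trans gsum_neg_self_le_zero zero_le_gsum_neg_self game_equiv_def by blast
qed

lemma gsum_zero_right [simp]: "gsum G zero = G"
  by (induction G) (simp add: zero_def map_idI)

lemma gsum_zero_left [simp]: "gsum zero G = G"
  by (induction G) (simp add: zero_def map_idI)

lemma left_opts_star [simp]: "left_opts star = [zero]"
  and right_opts_star [simp]: "right_opts star = [zero]"
  and neg_star [simp]: "neg star = star"
  by (simp_all add: star_def)

lemma left_opts_upn_Suc [simp]: "left_opts (upn (Suc k)) = [upn k]"
  and right_opts_upn_Suc [simp]: "right_opts (upn (Suc k)) = [star]"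
  by simp_all

declare upn.simps(2) [simp del]

lemma downn_eq_neg_upn: "downn k = neg (upn k)"
  by (induction k) (simp_all add: upn.simps)

abbreviation upstar :: "nat \<Rightarrow> game" where
  "upstar k \<equiv> gsum (upn k) star"

lemma left_opts_upstar_Suc: "left_opts (upstar (Suc k)) = [upstar k, upn (Suc k)]"
  by (simp add: left_opts_gsum)

lemma right_opts_upstar_Suc: "right_opts (upstar (Suc k)) = [gsum star star, upn (Suc k)]"
  by (simp add: right_opts_gsum)

lemma not_star_le_zero: "\<not> star \<preceq> zero"
  by (simp add: not_le_left_opt)

lemma not_zero_le_star: "\<not> zero \<preceq> star"
  by (simp add: not_right_opt_le)

lemma zero_le_upn: "zero \<preceq> upn k"
  by (cases k) (simp_all add: game_le_iff[of zero] not_star_le_zero)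

lemma upn_le_upn_Suc: "upn k \<preceq> upn (Suc k)"
proof (induction k)
  case 0
  show ?case by (simp add: zero_le_upn)
next
  case (Suc k)
  then have "\<not> upn (Suc (Suc k)) \<preceq> upn k"
    by (intro not_le_if_le_left_opt[of "upn (Suc k)"]) simp_all
  moreover have "\<not> star \<preceq> upn (Suc k)"
    by (simp add: not_right_opt_le)
  ultimately show ?case
    by (simp add: game_le_iff[of "upn (Suc k)"])
qed

lemma upn_mono: "j \<le> k \<Longrightarrow> upn j \<preceq> upn k"
  by (induction k rule: dec_induct) (auto intro: game_le_trans upn_le_upn_Suc)

lemma upstar_mono: "j \<le> k \<Longrightarrow> upstar j \<preceq> upstar k"
  by (simp add: gsum_mono upn_mono)

lemma upstar_strict_mono: "j < k \<Longrightarrow> \<not> upstar k \<preceq> upstar j"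
proof
  assume "j < k" "upstar k \<preceq> upstar j"
  then have "upstar (Suc j) \<preceq> upstar j"
    using upstar_mono[of "Suc j" k] game_le_trans by auto
  then show False
    by (simp add: not_le_left_opt left_opts_upstar_Suc)
qed

lemma not_upstar_le_star: "0 < k \<Longrightarrow> \<not> upstar k \<preceq> star"
  using upstar_strict_mono[of 0 k] by simp

lemma star_le_upstar: "star \<preceq> upstar k"
  using gsum_mono[OF zero_le_upn game_le_refl[of star]] by simp

lemma not_upstar_le_zero: "\<not> upstar k \<preceq> zero"
  by (rule not_le_if_le_left_opt[of "upn k"]) (simp_all add: left_opts_gsum zero_le_upn)

lemma zero_le_right_opts_upstar: "y \<in> set (right_opts (upstar k)) \<Longrightarrow> zero \<preceq> y"
  using zero_le_gsum_neg_self[of star] zero_le_upn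
  by (cases k) (auto simp: right_opts_upstar_Suc)

lemma not_zero_le_upstar: "\<not> zero \<preceq> upstar k"
proof (cases k)
  case 0
  then show ?thesis by (simp add: not_zero_le_star)
next
  case (Suc m)
  have "gsum star star \<preceq> zero"
    using gsum_neg_self_le_zero[of star] by simp
  with Suc show ?thesis
    by (intro not_le_if_right_opt_le[of "gsum star star"]) (simp_all add: right_opts_upstar_Suc)
qed

lemma star_le_Game_zero:
  assumes "\<forall>r\<in>set R. \<not> r \<preceq> star"
  shows "star \<preceq> Game (zero # L) (zero # R)"
  using assms not_le_left_opt[of zero "Game (zero # L) (zero # R)"]
  by (simp add: game_le_iff[of star] not_zero_le_star)

lemma Game_zero_le_upstar:
  assumes "\<forall>l\<in>set L. \<not> upstar k \<preceq> l"
  shows "Game (zero # L) (zero # R) \<preceq> upstar k"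
  using assms not_upstar_le_zero zero_le_right_opts_upstar
    not_le_if_right_opt_le[of zero "Game (zero # L) (zero # R)"]
  by (auto simp: game_le_iff[of "Game (zero # L) (zero # R)"])

lemma upstar_Suc_le_Game_zero:
  assumes "\<forall>r\<in>set R. \<not> r \<preceq> star \<and> \<not> r \<preceq> upstar (Suc k)"
    and "\<not> Game (zero # L) (zero # R) \<preceq> upstar k"
  shows "upstar (Suc k) \<preceq> Game (zero # L) (zero # R)"
proof -
  have "\<not> Game (zero # L) (zero # R) \<preceq> upn (Suc k)"
    using assms(1) by (intro not_le_if_right_opt_le[of star] star_le_Game_zero) simp_all
  with assms not_zero_le_upstar show ?thesis
    by (simp add: game_le_iff[of "upstar (Suc k)"] left_opts_upstar_Suc)
qed

abbreviation zero_or :: "game \<Rightarrow> game" where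
  "zero_or G \<equiv> Game [zero, G] [zero, G]"

lemma upstar_Suc_equiv_reversed:
  "upstar (Suc k) \<approx> Game [zero, upstar k] [zero, upstar (Suc (Suc k))]"
  unfolding game_equiv_def
  using upstar_Suc_le_Game_zero[of "[upstar (Suc (Suc k))]" k "[upstar k]"]
    Game_zero_le_upstar[of "[upstar k]" "Suc k"]
  by (simp add: upstar_strict_mono not_upstar_le_star not_le_left_opt)

lemma upstar_Suc_equiv:
  "upstar (Suc k) \<approx> Game [zero, upstar k] [zero]"
  unfolding game_equiv_def
  using upstar_Suc_le_Game_zero[of "[]" k "[upstar k]"]
    Game_zero_le_upstar[of "[upstar k]" "Suc k"]
  by (simp add: upstar_strict_mono not_upstar_le_star not_le_left_opt)

lemma upstar_le_zero_or: "j < k \<Longrightarrow> upstar j \<preceq> zero_or (upstar k)"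
proof (cases j)
  case 0
  assume "j < k"
  then show ?thesis
    using 0 star_le_Game_zero[of "[upstar k]"] not_upstar_le_star by simp
next
  case (Suc i)
  assume "j < k"
  have "\<not> zero_or (upstar k) \<preceq> upstar i"
    using \<open>j < k\<close> Suc upstar_mono[of i k]
    by (intro not_le_if_le_left_opt[of "upstar k"]) simp_all
  with \<open>j < k\<close> Suc show ?thesis
    using upstar_Suc_le_Game_zero[of "[upstar k]" i "[upstar k]"]
    by (simp add: upstar_strict_mono not_upstar_le_star)
qed

lemma upstar_Suc_equiv_zero_or:
  "upstar (Suc k) \<approx> zero_or (zero_or (upstar (Suc k)))"
proof -
  let ?X = "zero_or (upstar (Suc k))"
  have "\<not> ?X \<preceq> star"
    using star_le_upstar by (intro not_le_if_le_left_opt[of "upstar (Suc k)"]) simp_all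
  moreover have "\<not> zero_or ?X \<preceq> upstar k"
    using upstar_le_zero_or[of k "Suc k"] by (intro not_le_if_le_left_opt[of ?X]) simp_all
  moreover have "\<not> upstar (Suc k) \<preceq> ?X"
    by (simp add: not_right_opt_le)
  ultimately show ?thesis
    unfolding game_equiv_def
    using upstar_Suc_le_Game_zero[of "[?X]" k "[?X]"] Game_zero_le_upstar[of "[?X]" "Suc k"]
    by (simp add: not_le_left_opt)
qed

lemma gsum_downn_star: "gsum (downn k) star = neg (upstar k)"
  by (simp add: downn_eq_neg_upn neg_gsum)

theorem theorem2:
  fixes n :: nat
  assumes "n \<ge> 1"
  shows "game_eq (gsum (upn n) star)
           (Game [zero, gsum (upn (n - 1)) star] [zero, gsum (upn (n + 1)) star])
       \<and> game_eq (Game [zero, gsum (upn (n - 1)) star] [zero, gsum (upn (n + 1)) star])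
           (Game [zero, gsum (upn (n - 1)) star] [zero])
       \<and> game_eq (gsum (downn n) star)
           (Game [zero, gsum (downn (n + 1)) star] [zero, gsum (downn (n - 1)) star])
       \<and> game_eq (Game [zero, gsum (downn (n + 1)) star] [zero, gsum (downn (n - 1)) star])
           (Game [zero] [zero, gsum (downn (n - 1)) star])
       \<and> game_eq (gsum (upn n) star)
           (Game [zero, Game [zero, gsum (upn n) star] [zero, gsum (upn n) star]]
                 [zero, Game [zero, gsum (upn n) star] [zero, gsum (upn n) star]])
       \<and> game_eq (gsum (downn n) star)
           (Game [zero, Game [zero, gsum (downn n) star] [zero, gsum (downn n) star]]
                 [zero, Game [zero, gsum (downn n) star] [zero, gsum (downn n) star]])"
proof -
  obtain m where n: "n = Suc m"
    using assms by (cases n) auto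
  let ?reversed = "Game [zero, upstar (n - 1)] [zero, upstar (n + 1)]"
  let ?reduced = "Game [zero, upstar (n - 1)] [zero]"
  have reversed: "upstar n \<approx> ?reversed"
    using upstar_Suc_equiv_reversed[of m] by (simp add: n)
  have "upstar n \<approx> ?reduced"
    using upstar_Suc_equiv[of m] by (simp add: n)
  with reversed have reduced: "?reversed \<approx> ?reduced"
    by (blast intro: game_equiv_sym game_equiv_trans)
  have zero_or: "upstar n \<approx> zero_or (zero_or (upstar n))"
    using upstar_Suc_equiv_zero_or[of m] by (simp add: n)
  have "neg (upstar n) \<approx> neg ?reversed" "neg ?reversed \<approx> neg ?reduced"
    "neg (upstar n) \<approx> neg (zero_or (zero_or (upstar n)))"
    using reversed reduced zero_or by (simp_all only: neg_equiv_neg_iff)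
  with reversed reduced zero_or show ?thesis
    unfolding gsum_downn_star by (simp add: game_eq_if_equiv)
qed

end
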